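(* Let $G$ be a graph on $[n]$ such that every $3$-subset of $[n]$ contains an edge of $G$. Then $E(G)$ dominates $B(n)$, where $B(n)=\{\{a,b\}: 1\le a<b\le n,\ a+b\le n\}$.
   Context: Let $X=(x_{ij})_{1\le i,j\le n}$ be a matrix of $n^2$ independent indeterminates over $\mathbb{Q}$, and for $1\le k\le n$ let $C_k(X)=(c_{S,T})$ be its $k$-th compound matrix: rows and columns are indexed by $k$-subsets $S,T$ of $[n]$, and $c_{S,T}=\det(x_{ij})_{i\in S,j\in T}$, computed in the field $\mathbb{Q}(x_{ij})$. For two families $F_1,F_2$ of $k$-subsets of $[n]$, $F_1$ dominates $F_2$ if the submatrix of $C_k(X)$ with rows indexed by $F_2$ and columns indexed by $F_1$ has rank $|F_2|$. A graph is identified with its set of edges, a family of $2$-subsets. *)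

theory Defs
  imports "HOL-Library.Poly_Mapping" "HOL-Library.Product_Lexorder" "HOL-Computational_Algebra.Fraction_Field"
    "Jordan_Normal_Form.DL_Rank"
begin

text \<open>Polynomials over Q in the indeterminates x_ij (indexed by pairs (i,j)),
  and the field Q(x_ij) as their fraction field.\<close>
type_synonym mpoly = "((nat \<times> nat) \<Rightarrow>\<^sub>0 nat) \<Rightarrow>\<^sub>0 rat"
type_synonym ratfun = "mpoly fract"

definition var :: "nat \<Rightarrow> nat \<Rightarrow> ratfun" where
  "var i j = Fract (Poly_Mapping.single (Poly_Mapping.single (i, j) 1) 1) 1"

text \<open>Entry c_{S,T} of the compound matrix: the minor of X with rows S and columns T.\<close>
definition minor :: "nat set \<Rightarrow> nat set \<Rightarrow> ratfun" where
  "minor S T = det (mat (card S) (card S)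
     (\<lambda>(a, b). var (sorted_list_of_set S ! a) (sorted_list_of_set T ! b)))"

text \<open>An arbitrary enumeration of a finite family (rank does not depend on it).\<close>
definition enum_fam :: "'a set \<Rightarrow> 'a list" where
  "enum_fam F = (SOME xs. set xs = F \<and> distinct xs)"

definition compound_submat :: "nat set set \<Rightarrow> nat set set \<Rightarrow> ratfun mat" where
  "compound_submat F2 F1 = mat (card F2) (card F1)
     (\<lambda>(a, b). minor (enum_fam F2 ! a) (enum_fam F1 ! b))"

definition dominates :: "nat set set \<Rightarrow> nat set set \<Rightarrow> bool" where
  "dominates F1 F2 =
     (vec_space.rank (card F2) (compound_submat F2 F1) = card F2)"

definition B :: "nat \<Rightarrow> nat set set" where
  "B n = {{a, b} | a b. 1 \<le> a \<and> a < b \<and> b \<le> n \<and> a + b \<le> n}"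

end

theory Submission
  imports Defs
begin

text \<open>It suffices to find a set \<open>E0 \<subseteq> E\<close> of \<open>|B(n)|\<close> edges and a rational
  specialisation of \<open>X\<close> under which the square matrix of \<open>2 \<times> 2\<close> minors with rows \<open>B(n)\<close>
  and columns \<open>E0\<close> is nonsingular: its determinant is then a nonzero polynomial, so these
  columns of the compound matrix are independent over \<open>\<rat>(x\<^sub>i\<^sub>j)\<close>.

  The data is built by induction on the number of vertices. Since every 3-set contains an edge,
  there are vertices \<open>u \<noteq> v\<close> such that every other vertex \<open>w\<close> is adjacent to \<open>u\<close> or \<open>v\<close>
  (take a non-edge \<open>{u, v}\<close> if there is one). Remove them, solve the smaller instance on the
  rows strictly between a new first row \<open>lo\<close> and a new last row \<open>hi\<close>, and border its
  specialisation: row \<open>lo\<close> is 1 at \<open>u\<close> and \<open>v\<close>, row \<open>hi\<close> is 1 at \<open>v\<close>, both vanish at all other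
  vertices, and the inner rows vanish at \<open>u\<close> and \<open>v\<close>. For an edge \<open>{z, w}\<close> with \<open>z \<in> {u, v}\<close>
  the minor with rows \<open>{lo, b}\<close> is \<open>\<plusminus>X b w\<close>, and the old pairs of \<open>B\<close> see only zero
  minors on these edges, so the new minor matrix is block triangular. Its diagonal blocks are
  nonsingular because the induction also keeps the rows of the specialisation itself linearly
  independent, which the bordering preserves.\<close>

definition rows_independent :: "'r set \<Rightarrow> 'c set \<Rightarrow> ('r \<Rightarrow> 'c \<Rightarrow> 'a::semiring_0) \<Rightarrow> bool" where
  "rows_independent R C M \<longleftrightarrow>
     (\<forall>c. (\<forall>j\<in>C. (\<Sum>i\<in>R. c i * M i j) = 0) \<longrightarrow> (\<forall>i\<in>R. c i = 0))"

lemma rows_independentI: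
  assumes "\<And>c i. \<forall>j\<in>C. (\<Sum>i\<in>R. c i * M i j) = 0 \<Longrightarrow> i \<in> R \<Longrightarrow> c i = 0"
  shows "rows_independent R C M"
  using assms unfolding rows_independent_def by blast

lemma rows_independentD:
  assumes "rows_independent R C M" "\<And>j. j \<in> C \<Longrightarrow> (\<Sum>i\<in>R. c i * M i j) = 0" "i \<in> R"
  shows "c i = 0"
  using assms unfolding rows_independent_def by blast

lemma rows_independent_empty: "rows_independent {} C M"
  by (simp add: rows_independent_def)

lemma rows_independent_cong:
  assumes "rows_independent R C M" "\<And>i j. i \<in> R \<Longrightarrow> j \<in> C \<Longrightarrow> N i j = M i j"
  shows "rows_independent R C N"
  using assms unfolding rows_independent_def by (metis (no_types, lifting) sum.cong)

lemma rows_independent_block_triangular: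
  assumes fin: "finite R1" "finite R2" "R1 \<inter> R2 = {}"
    and ind: "rows_independent R1 C1 M" "rows_independent R2 C2 M"
    and zero: "\<And>i j. i \<in> R2 \<Longrightarrow> j \<in> C1 \<Longrightarrow> M i j = 0"
  shows "rows_independent (R1 \<union> R2) (C1 \<union> C2) M"
proof (rule rows_independentI)
  fix c i assume c: "\<forall>j\<in>C1 \<union> C2. (\<Sum>i\<in>R1 \<union> R2. c i * M i j) = 0" and i: "i \<in> R1 \<union> R2"
  have split: "(\<Sum>i\<in>R1 \<union> R2. c i * M i j) = (\<Sum>i\<in>R1. c i * M i j) + (\<Sum>i\<in>R2. c i * M i j)" for j
    using fin by (rule sum.union_disjoint)
  have c_R1: "c i = 0" if "i \<in> R1" for i
  proof (rule rows_independentD[OF ind(1) _ that])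
    fix j assume "j \<in> C1"
    then show "(\<Sum>i\<in>R1. c i * M i j) = 0" using c split[of j] zero by simp
  qed
  have c_R2: "c i = 0" if "i \<in> R2" for i
  proof (rule rows_independentD[OF ind(2) _ that])
    fix j assume "j \<in> C2"
    then show "(\<Sum>i\<in>R2. c i * M i j) = 0" using c split[of j] c_R1 by simp
  qed
  show "c i = 0" using i c_R1 c_R2 by blast
qed

lemma rows_independent_rescale:
  fixes M :: "'r \<Rightarrow> 'c \<Rightarrow> 'a::idom"
  assumes ind: "rows_independent R C M" and inj: "inj_on h R"
    and scale: "\<And>j. j \<in> C \<Longrightarrow> \<exists>s. s \<noteq> 0 \<and> (\<forall>i\<in>R. N (h i) (g j) = s * M i j)"
  shows "rows_independent (h ` R) (g ` C) N"
proof (rule rows_independentI)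
  fix c i' assume c: "\<forall>j'\<in>g ` C. (\<Sum>i\<in>h ` R. c i * N i j') = 0" and "i' \<in> h ` R"
  then obtain i where i: "i \<in> R" "i' = h i" by blast
  have "(\<Sum>i\<in>R. c (h i) * M i j) = 0" if j: "j \<in> C" for j
  proof -
    obtain s where s: "s \<noteq> 0" "\<forall>i\<in>R. N (h i) (g j) = s * M i j" using scale[OF j] by blast
    have "s * (\<Sum>i\<in>R. c (h i) * M i j) = (\<Sum>i\<in>h ` R. c i * N i (g j))"
      by (simp add: sum.reindex[OF inj] sum_distrib_left s(2) mult.left_commute)
    then show ?thesis using c j s(1) by simp
  qed
  then have "c (h i) = 0" using rows_independentD[OF ind, of "\<lambda>i. c (h i)"] i(1) by blast
  then show "c i' = 0" using i(2) by simp
qed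

definition minor2 ::
    "('r::linorder \<Rightarrow> 'c::linorder \<Rightarrow> 'a::comm_ring_1) \<Rightarrow> 'r set \<Rightarrow> 'c set \<Rightarrow> 'a" where
  "minor2 X S T = X (Min S) (Min T) * X (Max S) (Max T) - X (Min S) (Max T) * X (Max S) (Min T)"

lemma (in comm_ring_hom) hom_minor2: "hom (minor2 X S T) = minor2 (\<lambda>i j. hom (X i j)) S T"
  unfolding minor2_def by (simp add: hom_distribs)

lemma minor2_cong:
  assumes "finite S" "S \<noteq> {}" "finite T" "T \<noteq> {}" "\<And>i j. i \<in> S \<Longrightarrow> j \<in> T \<Longrightarrow> X i j = Y i j"
  shows "minor2 X S T = minor2 Y S T"
  unfolding minor2_def using assms by (simp add: Min_in Max_in)

lemma minor2_zero_column:
  assumes "T = {z, w}" "X (Min S) z = 0" "X (Max S) z = 0"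
  shows "minor2 X S T = 0"
  using assms unfolding minor2_def by (cases "z \<le> w") (auto simp: max_def min_def)

lemma minor2_pivot:
  assumes "a < b" "z \<noteq> w" "X a z = 1" "X b z = 0" "X a w = 0"
  shows "minor2 X {a, b} {z, w} = (if z < w then 1 else -1) * X b w"
  using assms unfolding minor2_def by (cases "z < w") (auto simp: max_def min_def)

text \<open>\<open>B_on lo k\<close> is B(k) moved to the interval \<open>{lo..<lo+k}\<close>:
  \<open>{a, b}\<close> belongs to it iff \<open>(a - lo + 1) + (b - lo + 1) \<le> k\<close>.\<close>
definition B_on :: "nat \<Rightarrow> nat \<Rightarrow> nat set set" where
  "B_on lo k = {{a, b} | a b. lo \<le> a \<and> a < b \<and> b < lo + k \<and> a + b + 1 < 2 * lo + k}"

lemma B_eq_B_on: "B n = B_on 1 n"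
  unfolding B_def B_on_def by (intro Collect_cong ex_cong1 conj_cong refl) auto

lemma B_on_subset: "B_on lo k \<subseteq> Pow {lo..<lo + k}"
  unfolding B_on_def by auto

lemma finite_B_on: "finite (B_on lo k)"
  using B_on_subset by (rule finite_subset) simp

lemma B_on_small: "k < 2 \<Longrightarrow> B_on lo k = {}"
  unfolding B_on_def by auto

lemma B_onI:
  "lo \<le> a \<Longrightarrow> a < b \<Longrightarrow> b < lo + k \<Longrightarrow> a + b + 1 < 2 * lo + k \<Longrightarrow> {a, b} \<in> B_on lo k"
  unfolding B_on_def by blast

lemma B_onE:
  assumes "S \<in> B_on lo k"
  obtains a b where "S = {a, b}" "lo \<le> a" "a < b" "b < lo + k" "a + b + 1 < 2 * lo + k"
  using assms unfolding B_on_def by blast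

lemma B_on_Suc_Suc:
  "B_on lo (Suc (Suc k)) = (\<lambda>b. {lo, b}) ` {Suc lo..<Suc lo + k} \<union> B_on (Suc lo) k"
proof (intro equalityI subsetI)
  fix S assume "S \<in> B_on lo (Suc (Suc k))"
  then obtain a b where S: "S = {a, b}" "lo \<le> a" "a < b" "b < lo + Suc (Suc k)"
      "a + b + 1 < 2 * lo + Suc (Suc k)"
    by (rule B_onE)
  show "S \<in> (\<lambda>b. {lo, b}) ` {Suc lo..<Suc lo + k} \<union> B_on (Suc lo) k"
  proof (cases "a = lo")
    case True
    then show ?thesis using S by auto
  next
    case False
    have "S \<in> B_on (Suc lo) k" unfolding S(1) by (rule B_onI) (use S False in auto)
    then show ?thesis by blast
  qed
next
  fix S assume "S \<in> (\<lambda>b. {lo, b}) ` {Suc lo..<Suc lo + k} \<union> B_on (Suc lo) k"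
  then show "S \<in> B_on lo (Suc (Suc k))"
  proof
    assume "S \<in> (\<lambda>b. {lo, b}) ` {Suc lo..<Suc lo + k}"
    then show ?thesis by (auto intro: B_onI)
  next
    assume "S \<in> B_on (Suc lo) k"
    then show ?thesis by (rule B_onE) (auto intro: B_onI)
  qed
qed

lemma B_on_Suc_Suc_disjoint: "(\<lambda>b. {lo, b}) ` {Suc lo..<Suc lo + k} \<inter> B_on (Suc lo) k = {}"
  using B_on_subset[of "Suc lo" k] by fastforce

lemma inj_on_insert_lo: "inj_on (\<lambda>b. {lo, b}) {Suc lo..<Suc lo + k}"
  by (auto simp: inj_on_def doubleton_eq_iff)

lemma card_B_on_Suc_Suc: "card (B_on lo (Suc (Suc k))) = k + card (B_on (Suc lo) k)"
proof -
  have "card ((\<lambda>b. {lo, b}) ` {Suc lo..<Suc lo + k}) = k"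
    using card_image[OF inj_on_insert_lo] by simp
  then show ?thesis
    unfolding B_on_Suc_Suc
    by (simp only: card_Un_disjoint[OF finite_imageI[OF finite_atLeastLessThan] finite_B_on
          B_on_Suc_Suc_disjoint])
qed

definition bordered ::
    "nat \<Rightarrow> nat \<Rightarrow> 'v \<Rightarrow> 'v \<Rightarrow> (nat \<Rightarrow> 'v \<Rightarrow> 'a::comm_ring_1) \<Rightarrow> nat \<Rightarrow> 'v \<Rightarrow> 'a" where
  "bordered lo hi u v X b w =
     (if w = u then (if b = lo then 1 else 0)
      else if w = v then (if b = lo \<or> b = hi then 1 else 0)
      else if b = lo \<or> b = hi then 0 else X b w)"

lemma rows_independent_bordered:
  assumes ind: "rows_independent R C X" and "finite R"
    and "lo \<notin> R" "hi \<notin> R" "lo \<noteq> hi" "u \<notin> C" "v \<notin> C" "u \<noteq> v"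
  shows "rows_independent ({lo, hi} \<union> R) ({u, v} \<union> C) (bordered lo hi u v X)"
proof (rule rows_independent_block_triangular)
  show "rows_independent {lo, hi} {u, v} (bordered lo hi u v X)"
  proof (rule rows_independentI)
    fix c i assume "\<forall>j\<in>{u, v}. (\<Sum>i\<in>{lo, hi}. c i * bordered lo hi u v X i j) = 0" "i \<in> {lo, hi}"
    then show "c i = 0" using assms(5,8) by (auto simp: bordered_def)
  qed
  show "rows_independent R C (bordered lo hi u v X)"
    by (rule rows_independent_cong[OF ind]) (use assms in \<open>auto simp: bordered_def\<close>)
qed (use assms in \<open>auto simp: bordered_def\<close>)

lemma minor2_bordered_star:
  assumes "lo < b" "b \<noteq> hi" "z \<in> {u, v}" "w \<noteq> u" "w \<noteq> v"
  shows "minor2 (bordered lo hi u v X) {lo, b} {z, w} = (if z < w then 1 else -1) * X b w"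
proof -
  have "minor2 (bordered lo hi u v X) {lo, b} {z, w} =
      (if z < w then 1 else -1) * bordered lo hi u v X b w"
    by (rule minor2_pivot) (use assms in \<open>auto simp: bordered_def\<close>)
  also have "bordered lo hi u v X b w = X b w" using assms by (simp add: bordered_def)
  finally show ?thesis .
qed

lemma rows_independent_minor2_bordered:
  fixes X :: "nat \<Rightarrow> 'v::linorder \<Rightarrow> 'a::idom"
  assumes X: "rows_independent {Suc lo..<Suc lo + k} V X"
    and minors: "rows_independent (B_on (Suc lo) k) E (minor2 X)"
    and E: "\<And>e. e \<in> E \<Longrightarrow> card e = 2 \<and> e \<subseteq> V"
    and uv: "u \<notin> V" "v \<notin> V" "u \<noteq> v"
    and f: "\<And>w. w \<in> V \<Longrightarrow> \<exists>z\<in>{u, v}. f w = {z, w}"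
  shows "rows_independent (B_on lo (Suc (Suc k))) (f ` V \<union> E)
           (minor2 (bordered lo (lo + k + 1) u v X))"
  unfolding B_on_Suc_Suc
proof (rule rows_independent_block_triangular)
  let ?Y = "bordered lo (lo + k + 1) u v X"
  show "rows_independent ((\<lambda>b. {lo, b}) ` {Suc lo..<Suc lo + k}) (f ` V) (minor2 ?Y)"
  proof (rule rows_independent_rescale[OF X inj_on_insert_lo])
    fix w assume w: "w \<in> V"
    then obtain z where z: "z \<in> {u, v}" "f w = {z, w}" using f by blast
    have "\<forall>b\<in>{Suc lo..<Suc lo + k}. minor2 ?Y {lo, b} (f w) = (if z < w then 1 else -1) * X b w"
      unfolding z(2) by (intro ballI minor2_bordered_star) (use z(1) w uv in auto)
    then show "\<exists>s. s \<noteq> 0 \<and> (\<forall>b\<in>{Suc lo..<Suc lo + k}. minor2 ?Y {lo, b} (f w) = s * X b w)"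
      by (intro exI[of _ "if z < w then 1 else -1"]) simp
  qed
  show "rows_independent (B_on (Suc lo) k) E (minor2 ?Y)"
  proof (rule rows_independent_cong[OF minors])
    fix S e assume S: "S \<in> B_on (Suc lo) k" and e: "e \<in> E"
    have "finite e" "e \<noteq> {}" using E[OF e] card.infinite by fastforce+
    with S show "minor2 ?Y S e = minor2 X S e"
      by (elim B_onE, intro minor2_cong) (use E[OF e] uv in \<open>auto simp: bordered_def\<close>)
  qed
  show "minor2 ?Y S e = 0" if S: "S \<in> B_on (Suc lo) k" and e: "e \<in> f ` V" for S e
  proof -
    obtain w z where "z \<in> {u, v}" "e = {z, w}" using f e by blast
    with S show ?thesis
      by (elim B_onE, intro minor2_zero_column) (auto simp: bordered_def)
  qed
qed (use B_on_Suc_Suc_disjoint finite_B_on in auto)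

lemma exists_dominating_pair:
  assumes "finite V" "card V \<ge> 2" "\<forall>e\<in>E. card e = 2"
    and "\<forall>T. T \<subseteq> V \<and> card T = 3 \<longrightarrow> (\<exists>e\<in>E. e \<subseteq> T)"
  obtains u v where "u \<in> V" "v \<in> V" "u \<noteq> v" "\<forall>w\<in>V - {u, v}. {u, w} \<in> E \<or> {v, w} \<in> E"
proof (cases "\<exists>u\<in>V. \<exists>v\<in>V. u \<noteq> v \<and> {u, v} \<notin> E")
  case True
  then obtain u v where uv: "u \<in> V" "v \<in> V" "u \<noteq> v" "{u, v} \<notin> E" by blast
  have "{u, w} \<in> E \<or> {v, w} \<in> E" if w: "w \<in> V - {u, v}" for w
  proof -
    have "{u, v, w} \<subseteq> V" "card {u, v, w} = 3" using uv w by auto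
    then obtain e where e: "e \<in> E" "e \<subseteq> {u, v, w}" using assms(4) by blast
    then obtain x y where "e = {x, y}" "x \<noteq> y" using assms(3) card_2_iff by metis
    then have "e = {u, v} \<or> e = {u, w} \<or> e = {v, w}" using e(2) by (auto simp: insert_commute)
    then show ?thesis using e(1) uv(4) by blast
  qed
  then show ?thesis using that uv by blast
next
  case False
  obtain W where "W \<subseteq> V" "card W = 2" using assms(2) obtain_subset_with_card_n by metis
  then obtain u v where uv: "u \<in> V" "v \<in> V" "u \<noteq> v" by (metis card_2_iff insert_subset)
  have "{u, w} \<in> E" if "w \<in> V - {u, v}" for w
    using False uv(1) that by auto
  then show ?thesis using that uv by blast
qed

lemma card_star_edges_Un:
  assumes "finite V" "finite E" "\<forall>e\<in>E. e \<subseteq> V" "u \<notin> V" "v \<notin> V"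
    and f: "\<And>w. w \<in> V \<Longrightarrow> \<exists>z\<in>{u, v}. f w = {z, w}"
  shows "card (f ` V \<union> E) = card V + card E"
proof -
  have "inj_on f V"
  proof (rule inj_onI)
    fix w w' assume w: "w \<in> V" "w' \<in> V" "f w = f w'"
    obtain z where z: "z \<in> {u, v}" "f w' = {z, w'}" using f[OF w(2)] by blast
    obtain y where "y \<in> {u, v}" "f w = {y, w}" using f[OF w(1)] by blast
    then have "w \<in> {z, w'}" using w(3) z(2) by auto
    then show "w = w'" using w(1) z(1) assms(4,5) by auto
  qed
  moreover have "f ` V \<inter> E = {}"
  proof -
    have "\<not> f w \<subseteq> V" if "w \<in> V" for w using f[OF that] assms(4,5) by auto
    then show ?thesis using assms(3) by blast
  qed
  ultimately show ?thesis using assms(1,2) by (simp add: card_Un_disjoint card_image)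
qed

definition independent_specialization ::
    "nat \<Rightarrow> 'v::linorder set \<Rightarrow> 'v set set \<Rightarrow> 'v set set \<Rightarrow> (nat \<Rightarrow> 'v \<Rightarrow> 'a::idom) \<Rightarrow> bool" where
  "independent_specialization lo V E E0 X \<longleftrightarrow>
     E0 \<subseteq> E \<and> (\<forall>e\<in>E0. e \<subseteq> V) \<and> card E0 = card (B_on lo (card V)) \<and>
     rows_independent {lo..<lo + card V} V X \<and> rows_independent (B_on lo (card V)) E0 (minor2 X)"

lemma independent_specialization_bordered:
  fixes X :: "nat \<Rightarrow> 'v::linorder \<Rightarrow> 'a::idom"
  assumes spec: "independent_specialization (Suc lo) V E E0 X"
    and V: "finite V" "u \<notin> V" "v \<notin> V" "u \<noteq> v" and E: "\<forall>e\<in>E. card e = 2"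
    and f: "\<And>w. w \<in> V \<Longrightarrow> f w \<in> E \<and> (\<exists>z\<in>{u, v}. f w = {z, w})"
  shows "independent_specialization lo ({u, v} \<union> V) E (f ` V \<union> E0)
    (bordered lo (lo + card V + 1) u v X)"
proof -
  let ?k = "card V"
  have E0: "E0 \<subseteq> E" "\<forall>e\<in>E0. e \<subseteq> V" "card E0 = card (B_on (Suc lo) ?k)"
    and X: "rows_independent {Suc lo..<Suc lo + ?k} V X"
    and minors: "rows_independent (B_on (Suc lo) ?k) E0 (minor2 X)"
    using spec unfolding independent_specialization_def by auto
  have star: "\<And>w. w \<in> V \<Longrightarrow> \<exists>z\<in>{u, v}. f w = {z, w}" using f by blast
  have "finite E0" using E0(2) V(1) by (meson Pow_iff finite_Pow_iff finite_subset subsetI)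
  then have "card (f ` V \<union> E0) = card (B_on lo (Suc (Suc ?k)))"
    using card_star_edges_Un[OF V(1) _ E0(2) V(2,3) star] E0(3) card_B_on_Suc_Suc by simp
  moreover have "f ` V \<union> E0 \<subseteq> E" "\<forall>e\<in>f ` V \<union> E0. e \<subseteq> {u, v} \<union> V"
    using f E0(1,2) by auto
  moreover have "rows_independent {lo..<lo + Suc (Suc ?k)} ({u, v} \<union> V)
      (bordered lo (lo + ?k + 1) u v X)"
  proof -
    have rows: "{lo..<lo + Suc (Suc ?k)} = {lo, lo + ?k + 1} \<union> {Suc lo..<Suc lo + ?k}" by auto
    show ?thesis unfolding rows by (rule rows_independent_bordered[OF X]) (use V in auto)
  qed
  moreover have "rows_independent (B_on lo (Suc (Suc ?k))) (f ` V \<union> E0)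
      (minor2 (bordered lo (lo + ?k + 1) u v X))"
    by (rule rows_independent_minor2_bordered[OF X minors _ V(2-4) star]) (use E0 E in auto)
  moreover have "card ({u, v} \<union> V) = Suc (Suc ?k)" using V by simp
  ultimately show ?thesis unfolding independent_specialization_def by simp
qed

lemma exists_independent_specialization:
  fixes V :: "'v::linorder set"
  assumes "finite V" "\<forall>e\<in>E. card e = 2"
    and "\<forall>T. T \<subseteq> V \<and> card T = 3 \<longrightarrow> (\<exists>e\<in>E. e \<subseteq> T)"
  shows "\<exists>E0 (X :: nat \<Rightarrow> 'v \<Rightarrow> 'a::idom). independent_specialization lo V E E0 X"
  using assms
proof (induction "card V" arbitrary: V lo rule: less_induct)
  case less
  show ?case
  proof (cases "card V < 2")
    case True
    have "rows_independent {lo..<lo + card V} V (\<lambda>_ _. 1 :: 'a)"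
    proof (rule rows_independentI)
      fix c i
      assume c: "\<forall>j\<in>V. (\<Sum>i\<in>{lo..<lo + card V}. c i * (1 :: 'a)) = 0"
        and i: "i \<in> {lo..<lo + card V}"
      then have "card V = 1" "i = lo" using True by auto
      then show "c i = 0" using c by (auto elim: card_1_singletonE)
    qed
    moreover have "rows_independent (B_on lo (card V)) {} (minor2 (\<lambda>_ _. 1 :: 'a))"
      unfolding B_on_small[OF True] by (rule rows_independent_empty)
    ultimately show ?thesis
      unfolding independent_specialization_def
      by (intro exI[of _ "{}"] exI[of _ "\<lambda>_ _. 1 :: 'a"]) (simp add: B_on_small[OF True])
  next
    case False
    then have "card V \<ge> 2" by simp
    then obtain u v where uv: "u \<in> V" "v \<in> V" "u \<noteq> v"
      and dom: "\<forall>w\<in>V - {u, v}. {u, w} \<in> E \<or> {v, w} \<in> E"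
      using exists_dominating_pair[OF less.prems(1) _ less.prems(2,3)] by blast
    define V' where "V' = V - {u, v}"
    have V': "finite V'" "card V' < card V" "V = {u, v} \<union> V'" "u \<notin> V'" "v \<notin> V'"
      using less.prems(1) uv \<open>card V \<ge> 2\<close> unfolding V'_def by auto
    have "\<forall>T. T \<subseteq> V' \<and> card T = 3 \<longrightarrow> (\<exists>e\<in>E. e \<subseteq> T)"
      using less.prems(3) V'(3) by blast
    then obtain E0' and X' :: "nat \<Rightarrow> 'v \<Rightarrow> 'a"
      where spec: "independent_specialization (Suc lo) V' E E0' X'"
      using less.hyps[OF V'(2) V'(1) less.prems(2)] by blast
    define f where "f w = (if {u, w} \<in> E then {u, w} else {v, w})" for w
    have "f w \<in> E \<and> (\<exists>z\<in>{u, v}. f w = {z, w})" if "w \<in> V'" for w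
      using dom that unfolding f_def V'_def by auto
    from independent_specialization_bordered[OF spec V'(1,4,5) uv(3) less.prems(2) this]
    show ?thesis by (subst V'(3)) blast
  qed
qed

definition eval_monom :: "('v \<Rightarrow> 'a::comm_semiring_1) \<Rightarrow> ('v \<Rightarrow>\<^sub>0 nat) \<Rightarrow> 'a" where
  "eval_monom a m = (\<Prod>v\<in>Poly_Mapping.keys m. a v ^ Poly_Mapping.lookup m v)"

definition eval_mpoly :: "('v \<Rightarrow> 'a::comm_semiring_1) \<Rightarrow> (('v \<Rightarrow>\<^sub>0 nat) \<Rightarrow>\<^sub>0 'a) \<Rightarrow> 'a" where
  "eval_mpoly a p = (\<Sum>m\<in>Poly_Mapping.keys p. Poly_Mapping.lookup p m * eval_monom a m)"

lemma eval_monom_superset: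
  "finite S \<Longrightarrow> Poly_Mapping.keys m \<subseteq> S \<Longrightarrow>
    eval_monom a m = (\<Prod>v\<in>S. a v ^ Poly_Mapping.lookup m v)"
  unfolding eval_monom_def by (rule prod.mono_neutral_left) (auto simp: in_keys_iff)

lemma eval_monom_add: "eval_monom a (m + n) = eval_monom a m * eval_monom a n"
proof -
  let ?S = "Poly_Mapping.keys m \<union> Poly_Mapping.keys n"
  have "eval_monom a (m + n) = (\<Prod>v\<in>?S. a v ^ Poly_Mapping.lookup (m + n) v)"
    by (rule eval_monom_superset) (auto simp: keys_add)
  also have "\<dots> = (\<Prod>v\<in>?S. a v ^ Poly_Mapping.lookup m v) *
      (\<Prod>v\<in>?S. a v ^ Poly_Mapping.lookup n v)"
    by (simp add: lookup_add power_add prod.distrib)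
  also have "\<dots> = eval_monom a m * eval_monom a n"
    by (simp add: eval_monom_superset[symmetric])
  finally show ?thesis .
qed

lemma eval_mpoly_superset:
  "finite S \<Longrightarrow> Poly_Mapping.keys p \<subseteq> S \<Longrightarrow>
    eval_mpoly a p = (\<Sum>m\<in>S. Poly_Mapping.lookup p m * eval_monom a m)"
  unfolding eval_mpoly_def by (rule sum.mono_neutral_left) (auto simp: in_keys_iff)

lemma eval_mpoly_add: "eval_mpoly a (p + q) = eval_mpoly a p + eval_mpoly a q"
proof -
  let ?S = "Poly_Mapping.keys p \<union> Poly_Mapping.keys q"
  have "eval_mpoly a (p + q) = (\<Sum>m\<in>?S. Poly_Mapping.lookup (p + q) m * eval_monom a m)"
    by (rule eval_mpoly_superset) (auto simp: keys_add)
  also have "\<dots> = (\<Sum>m\<in>?S. Poly_Mapping.lookup p m * eval_monom a m) +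
      (\<Sum>m\<in>?S. Poly_Mapping.lookup q m * eval_monom a m)"
    by (simp add: lookup_add distrib_right sum.distrib)
  also have "\<dots> = eval_mpoly a p + eval_mpoly a q"
    by (simp add: eval_mpoly_superset[symmetric])
  finally show ?thesis .
qed

lemma eval_mpoly_single: "eval_mpoly a (Poly_Mapping.single m c) = c * eval_monom a m"
  unfolding eval_mpoly_def by simp

lemma eval_mpoly_zero: "eval_mpoly a 0 = 0"
  by (simp add: eval_mpoly_def)

lemma eval_mpoly_sum: "eval_mpoly a (sum f A) = (\<Sum>x\<in>A. eval_mpoly a (f x))"
  by (induction A rule: infinite_finite_induct) (simp_all add: eval_mpoly_zero eval_mpoly_add)

lemma eval_mpoly_mult: "eval_mpoly a (p * q) = eval_mpoly a p * eval_mpoly a q"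
proof -
  have decomp: "r = (\<Sum>m\<in>Poly_Mapping.keys r. Poly_Mapping.single m (Poly_Mapping.lookup r m))"
    for r :: "('v \<Rightarrow>\<^sub>0 nat) \<Rightarrow>\<^sub>0 'a"
    by (rule poly_mapping_eqI) (simp add: lookup_sum lookup_single when_def in_keys_iff)
  have "p * q = (\<Sum>m\<in>Poly_Mapping.keys p. \<Sum>n\<in>Poly_Mapping.keys q.
      Poly_Mapping.single (m + n) (Poly_Mapping.lookup p m * Poly_Mapping.lookup q n))"
    by (subst decomp[of p], subst decomp[of q]) (simp add: sum_product mult_single)
  then have "eval_mpoly a (p * q) =
      (\<Sum>m\<in>Poly_Mapping.keys p. \<Sum>n\<in>Poly_Mapping.keys q.
        Poly_Mapping.lookup p m * Poly_Mapping.lookup q n * (eval_monom a m * eval_monom a n))"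
    by (simp add: eval_mpoly_sum eval_mpoly_single eval_monom_add)
  also have "\<dots> = eval_mpoly a p * eval_mpoly a q"
    unfolding eval_mpoly_def sum_product by (simp add: ac_simps)
  finally show ?thesis .
qed

interpretation eval_mpoly: comm_ring_hom "eval_mpoly a"
proof
  show "eval_mpoly a 1 = 1"
    using eval_mpoly_single[of a 0 1] by (simp add: eval_monom_def)
qed (simp_all add: eval_mpoly_zero eval_mpoly_add eval_mpoly_mult)

definition mvar :: "'v \<Rightarrow> ('v \<Rightarrow>\<^sub>0 nat) \<Rightarrow>\<^sub>0 'a::comm_semiring_1" where
  "mvar v = Poly_Mapping.single (Poly_Mapping.single v 1) 1"

lemma eval_mpoly_mvar: "eval_mpoly a (mvar v) = a v"
  by (simp add: mvar_def eval_mpoly_single eval_monom_def)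

definition fract_of :: "'a::idom \<Rightarrow> 'a fract" where
  "fract_of p = Fract p 1"

interpretation fract_of: inj_comm_ring_hom fract_of
  by unfold_locales
    (simp_all add: fract_of_def Zero_fract_def One_fract_def add_fract mult_fract eq_fract)

lemma det_mat_2: "det (mat 2 2 f) = (f (0, 0) * f (1, 1) - f (0, 1) * f (1, 0) :: 'a::comm_ring_1)"
proof -
  have "det (mat 1 1 g) = g (0, 0)" for g :: "nat \<times> nat \<Rightarrow> 'a"
    by (subst laplace_expansion_row[where i = 0 and n = 1])
      (auto simp: cofactor_def mat_delete_def)
  then show ?thesis
    by (subst laplace_expansion_row[where i = 0 and n = 2])
      (auto simp: cofactor_def mat_delete_def numeral_2_eq_2 lessThan_Suc)
qed

lemma sorted_list_of_set_card_2: "card S = 2 \<Longrightarrow> sorted_list_of_set S = [Min S, Max S]"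
  by (auto simp: card_2_iff insert_commute linorder_neq_iff)

lemma minor_eq_minor2: "card S = 2 \<Longrightarrow> card T = 2 \<Longrightarrow> minor S T = minor2 var S T"
  unfolding minor_def minor2_def by (simp add: sorted_list_of_set_card_2 det_mat_2)

lemma var_eq_fract_of_mvar: "var = (\<lambda>i j. fract_of (mvar (i, j)))"
  by (simp add: fun_eq_iff var_def fract_of_def mvar_def)

lemma
  assumes "finite F"
  shows set_enum_fam: "set (enum_fam F) = F" and distinct_enum_fam: "distinct (enum_fam F)"
    and length_enum_fam: "length (enum_fam F) = card F"
proof -
  have "set (enum_fam F) = F \<and> distinct (enum_fam F)"
    unfolding enum_fam_def using finite_distinct_list[OF assms] by (rule someI_ex)
  then show "set (enum_fam F) = F" "distinct (enum_fam F)" "length (enum_fam F) = card F"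
    using distinct_card by fastforce+
qed

lemma det_ne_zero_if_rows_independent:
  fixes M :: "'r \<Rightarrow> 'c \<Rightarrow> 'a::field"
  assumes ind: "rows_independent (set rs) (set cs) M" and "distinct rs"
    and len: "length rs = m" "length cs = m"
  shows "det (mat m m (\<lambda>(i, j). M (rs ! i) (cs ! j))) \<noteq> 0"
proof
  let ?A = "mat m m (\<lambda>(i, j). M (rs ! i) (cs ! j))"
  assume "det ?A = 0"
  then have "det (transpose_mat ?A) = 0" using det_transpose[of ?A m] by simp
  then obtain x where x: "x \<in> carrier_vec m" "x \<noteq> 0\<^sub>v m" "transpose_mat ?A *\<^sub>v x = 0\<^sub>v m"
    using det_0_iff_vec_prod_zero_field[of "transpose_mat ?A" m] by auto
  have bij: "bij_betw ((!) rs) {..<m} (set rs)"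
    using bij_betw_nth[of rs "{..<m}" "set rs"] assms(2) len by simp
  define c where "c r = x $ inv_into {..<m} ((!) rs) r" for r
  have c: "c (rs ! i) = x $ i" if "i < m" for i
    unfolding c_def using bij that by (simp add: bij_betw_def inv_into_f_f)
  have "(\<Sum>r\<in>set rs. c r * M r s) = 0" if s: "s \<in> set cs" for s
  proof -
    obtain j where j: "j < m" "s = cs ! j" using s len(2) by (metis in_set_conv_nth)
    have "(\<Sum>r\<in>set rs. c r * M r s) = (\<Sum>i<m. c (rs ! i) * M (rs ! i) s)"
      by (rule sum.reindex_bij_betw[OF bij, symmetric])
    also have "\<dots> = (transpose_mat ?A *\<^sub>v x) $ j"
      using j x(1) c by (simp add: scalar_prod_def lessThan_atLeast0 mult.commute)
    also have "\<dots> = 0" using x(3) j by simp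
    finally show ?thesis .
  qed
  then have "c (rs ! i) = 0" if "i < m" for i
    using rows_independentD[OF ind] that len by (metis nth_mem)
  then have "x = 0\<^sub>v m" using x(1) c by (intro eq_vecI) auto
  with x(2) show False by simp
qed

lemma rank_le_dim_row:
  fixes A :: "'a::field mat"
  assumes A: "A \<in> carrier_mat n nc"
  shows "vec_space.rank n A \<le> n"
proof -
  interpret vs: vec_space "TYPE('a)" n .
  obtain S where S: "maximal S (\<lambda>T. T \<subseteq> set (cols A) \<and> vs.lin_indpt T)"
    using maximal_exists[of "\<lambda>T. T \<subseteq> set (cols A) \<and> vs.lin_indpt T" "card (set (cols A))" "{}"]
    by (meson List.finite_set card_mono empty_iff empty_subsetI vs.finite_lin_indpt2 rev_finite_subset)
  then have "S \<subseteq> carrier_vec n" "vs.lin_indpt S"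
    using cols_dim[of A] A unfolding maximal_def by auto
  then have "card S \<le> n" using vs.li_le_dim(2)[OF vs.fin_dim] vs.dim_is_n by simp
  then show ?thesis using vs.rank_card_indpt[OF A S] by simp
qed

lemma rank_eq_dim_row_if_nonsingular_cols:
  fixes A A0 :: "'a::field mat"
  assumes A: "A \<in> carrier_mat n nc" and A0: "A0 \<in> carrier_mat n n"
    and "det A0 \<noteq> 0" and cols: "set (cols A0) \<subseteq> set (cols A)"
  shows "vec_space.rank n A = n"
proof -
  interpret vs: vec_space "TYPE('a)" n .
  have rk0: "vs.rank A0 = n" using vs.det_rank_iff[OF A0] assms(3) by simp
  have dist: "distinct (cols A0)" using vs.non_distinct_low_rank[OF A0] rk0 by (metis less_irrefl)
  have "vs.lin_indpt (set (cols A0))" by (rule vs.full_rank_lin_indpt[OF A0 rk0 dist])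
  moreover have "card (set (cols A0)) = n" using dist A0 distinct_card by fastforce
  ultimately have "n \<le> vs.rank A" using vs.rank_ge_card_indpt[OF A cols] by simp
  with rank_le_dim_row[OF A] show ?thesis by simp
qed

lemma set_cols_mat: "set (cols (mat m k f)) = (\<lambda>j. vec m (\<lambda>i. f (i, j))) ` {..<k}"
  by (auto simp: cols_def)

lemma set_cols_mat_subset:
  assumes "set cs \<subseteq> set es"
  shows "set (cols (mat m (length cs) (\<lambda>(i, j). f i (cs ! j))))
    \<subseteq> set (cols (mat m (length es) (\<lambda>(i, j). f i (es ! j))))"
proof -
  have "(!) xs ` {..<length xs} = set xs" for xs :: "'a list"
    using nth_image[of "length xs" xs] by (simp add: lessThan_atLeast0)
  then have "(!) cs ` {..<length cs} \<subseteq> (!) es ` {..<length es}"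
    using assms by simp
  then show ?thesis unfolding set_cols_mat by fastforce
qed

lemma det_minor_matrix_ne_zero:
  fixes X :: "nat \<Rightarrow> nat \<Rightarrow> rat"
  assumes "\<forall>i<m. card (rs ! i) = 2" "\<forall>j<m. card (cs ! j) = 2"
    and "det (mat m m (\<lambda>(i, j). minor2 X (rs ! i) (cs ! j))) \<noteq> 0"
  shows "det (mat m m (\<lambda>(i, j). minor (rs ! i) (cs ! j))) \<noteq> 0"
proof -
  let ?P = "mat m m (\<lambda>(i, j). minor2 (\<lambda>i j. mvar (i, j)) (rs ! i) (cs ! j)) :: mpoly mat"
  have "map_mat (eval_mpoly (\<lambda>(i, j). X i j)) ?P = mat m m (\<lambda>(i, j). minor2 X (rs ! i) (cs ! j))"
    by (rule eq_matI) (simp_all add: eval_mpoly.hom_minor2 eval_mpoly_mvar)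
  then have "eval_mpoly (\<lambda>(i, j). X i j) (det ?P) \<noteq> 0"
    using assms(3) by (simp add: eval_mpoly.hom_det[symmetric])
  then have "det ?P \<noteq> 0" by (metis eval_mpoly_zero)
  moreover have "mat m m (\<lambda>(i, j). minor (rs ! i) (cs ! j)) = map_mat fract_of ?P"
    using assms(1,2)
    by (intro eq_matI) (simp_all add: minor_eq_minor2 fract_of.hom_minor2 var_eq_fract_of_mvar)
  ultimately show ?thesis by simp
qed

lemma dominates_if_rows_independent_minors:
  fixes X :: "nat \<Rightarrow> nat \<Rightarrow> rat"
  assumes "finite F1" "finite F2" "E0 \<subseteq> F1" "card E0 = card F2"
    and "\<forall>S\<in>F2. card S = 2" "\<forall>T\<in>E0. card T = 2"
    and "rows_independent F2 E0 (minor2 X)"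
  shows "dominates F1 F2"
proof -
  define rs cs es where "rs = enum_fam F2" and "cs = enum_fam E0" and "es = enum_fam F1"
  have "finite E0" using assms(1,3) by (rule finite_subset[rotated])
  then have enums: "set rs = F2" "distinct rs" "length rs = card F2"
    "set cs = E0" "length cs = card F2" "set es = F1" "length es = card F1"
    using assms(1,2,4) unfolding rs_def cs_def es_def
    by (simp_all add: set_enum_fam distinct_enum_fam length_enum_fam)
  have A: "compound_submat F2 F1 = mat (card F2) (length es) (\<lambda>(i, j). minor (rs ! i) (es ! j))"
    unfolding compound_submat_def rs_def es_def using length_enum_fam[OF assms(1)] by simp
  let ?A0 = "mat (card F2) (length cs) (\<lambda>(i, j). minor (rs ! i) (cs ! j))"
  have "card (rs ! i) = 2" "card (cs ! i) = 2" if "i < card F2" for i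
    using assms(5,6) nth_mem[of i rs] nth_mem[of i cs] enums that by auto
  moreover have "det (mat (card F2) (card F2) (\<lambda>(i, j). minor2 X (rs ! i) (cs ! j))) \<noteq> 0"
    using det_ne_zero_if_rows_independent[of rs cs "minor2 X" "card F2"] assms(7) enums by simp
  ultimately have "det ?A0 \<noteq> 0"
    using det_minor_matrix_ne_zero[of "card F2" rs cs X] enums(5) by simp
  moreover have "set (cols ?A0) \<subseteq> set (cols (compound_submat F2 F1))"
    unfolding A by (rule set_cols_mat_subset) (use assms(3) enums in simp)
  ultimately show ?thesis
    unfolding dominates_def A using enums(5)
    by (intro rank_eq_dim_row_if_nonsingular_cols[of _ _ "length es" ?A0]) simp_all
qed

theorem mainTheorem2:
  fixes n :: nat and E :: "nat set set"
  assumes graph: "E \<subseteq> {e. e \<subseteq> {1..n} \<and> card e = 2}"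
    and triples: "\<forall>T. T \<subseteq> {1..n} \<and> card T = 3 \<longrightarrow> (\<exists>e\<in>E. e \<subseteq> T)"
  shows "dominates E (B n)"
proof -
  have E2: "\<forall>e\<in>E. card e = 2" using graph by auto
  obtain E0 and X :: "nat \<Rightarrow> nat \<Rightarrow> rat" where "independent_specialization 1 {1..n} E E0 X"
    using exists_independent_specialization[OF finite_atLeastAtMost E2 triples] by blast
  then have "E0 \<subseteq> E" "card E0 = card (B n)" "rows_independent (B n) E0 (minor2 X)"
    unfolding independent_specialization_def B_eq_B_on by auto
  moreover have "finite E" using graph by (rule finite_subset) simp
  moreover have "\<forall>S\<in>B n. card S = 2" unfolding B_def by auto
  ultimately show ?thesis
    using dominates_if_rows_independent_minors[of E "B n" E0 X] E2 B_eq_B_on finite_B_on by auto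
qed

end
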